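(* Let $\mathcal{A}=\{1,\dots,N\}$, $\boldsymbol{\lambda}\in\mathbb{R}_+^N$, $\boldsymbol{\delta}\in\mathbb{R}^N$ with $\delta_i>0$, $B\in\mathbb{R}_+^{N\times N}$ with zero diagonal whose associated directed graph is weakly connected but not strongly connected, $\mathcal{S}\subset\mathbb{R}_+^N$ convex, $w:\mathbb{R}_+^N\to\mathbb{R}$ convex, $\mathbf{c}\in\mathbb{R}_+^N$, and $q_i:\mathbb{R}_+\to(0,1]$ decreasing, strictly convex, continuously differentiable. For $\mathbf{s}\in\mathcal{S}$ let $\bar{\mathbf{p}}^0(\mathbf{s}):=\bar{\mathbf{p}}(\mathbf{s})$ be the unique stable equilibrium of $\dot{\mathbf{p}}=(\mathbf{1}-\mathbf{p})\circ\mathbf{q}(\mathbf{s})\circ(\boldsymbol{\lambda}+B\mathbf{p})-\boldsymbol{\delta}\circ\mathbf{p}$, and for $\epsilon>0$ let $\bar{\mathbf{p}}^\epsilon(\mathbf{s})>\mathbf{0}$ be the unique strictly positive solution of $(\mathbf{1}-\mathbf{p})\circ(\boldsymbol{\lambda}+\epsilon\mathbf{1}+B\mathbf{p})-\mathbf{q}(\mathbf{s})^{-1}\circ\boldsymbol{\delta}\circ\mathbf{p}=\mathbf{0}$. Define $F^*_\epsilon:=\min_{\mathbf{s}\in\mathcal{S}}\big(w(\mathbf{s})+\mathbf{c}^{\mathsf T}\bar{\mathbf{p}}^\epsilon(\mathbf{s})\big)$ for $\epsilon\ge0$. Then $F^*_\epsilon$ is increasing in $\epsilon\ge0$.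
   Context: $\circ$ is the element-wise product; $\mathbf{q}(\mathbf{s})=(q_i(s_i))_i$ and $\mathbf{q}(\mathbf{s})^{-1}$ is its element-wise inverse. The associated graph has an edge $(j,i)$ iff $b_{i,j}>0$. $\mathbf{c}$ is the vector of loss rates of infected systems, and $F^*_0$ is the optimal average cost of the original (unperturbed) problem. *)

theory Defs
  imports "HOL-Analysis.Analysis"
begin

definition graph_edges :: "real^'n^'n \<Rightarrow> ('n \<times> 'n) set" where
  "graph_edges B = {(j, i). B $ i $ j > 0}"

definition weakly_connected :: "real^'n^'n \<Rightarrow> bool" where
  "weakly_connected B \<longleftrightarrow>
     (\<forall>u v. (u, v) \<in> (graph_edges B \<union> (graph_edges B)\<inverse>)\<^sup>*)"

definition strongly_connected :: "real^'n^'n \<Rightarrow> bool" where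
  "strongly_connected B \<longleftrightarrow> (\<forall>u v. (u, v) \<in> (graph_edges B)\<^sup>*)"

definition sis_field ::
  "real^'n \<Rightarrow> real^'n \<Rightarrow> real^'n^'n \<Rightarrow> ('n \<Rightarrow> real \<Rightarrow> real) \<Rightarrow> real^'n
   \<Rightarrow> real^'n \<Rightarrow> real^'n" where
  "sis_field lam delta B q s p =
     (\<chi> i. (1 - p $ i) * q i (s $ i) * (lam $ i + (B *v p) $ i) - delta $ i * p $ i)"

definition prob_box :: "(real^'n) set" where
  "prob_box = {p. \<forall>i. 0 \<le> p $ i \<and> p $ i \<le> 1}"

definition is_solution :: "(real^'n \<Rightarrow> real^'n) \<Rightarrow> (real^'n) set \<Rightarrow> (real \<Rightarrow> real^'n) \<Rightarrow> bool" where
  "is_solution f X x \<longleftrightarrow>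
     (\<forall>t\<ge>0. (x has_vector_derivative f (x t)) (at t within {0..}) \<and> x t \<in> X)"

definition stable_equilibrium :: "(real^'n \<Rightarrow> real^'n) \<Rightarrow> (real^'n) set \<Rightarrow> real^'n \<Rightarrow> bool" where
  "stable_equilibrium f X p \<longleftrightarrow>
     p \<in> X \<and> f p = 0 \<and>
     (\<forall>e>0. \<exists>d>0. \<forall>x. is_solution f X x \<and> dist (x 0) p < d \<longrightarrow>
                         (\<forall>t\<ge>0. dist (x t) p < e)) \<and>
     (\<exists>d>0. \<forall>x. is_solution f X x \<and> dist (x 0) p < d \<longrightarrow> (x \<longlongrightarrow> p) at_top)"

definition pbar ::
  "real^'n \<Rightarrow> real^'n \<Rightarrow> real^'n^'n \<Rightarrow> ('n \<Rightarrow> real \<Rightarrow> real) \<Rightarrow> real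
   \<Rightarrow> real^'n \<Rightarrow> real^'n" where
  "pbar lam delta B q eps s =
     (if eps = 0 then (THE p. stable_equilibrium (sis_field lam delta B q s) prob_box p)
      else (THE p. (\<forall>i. p $ i > 0) \<and>
              (\<forall>i. (1 - p $ i) * (lam $ i + eps + (B *v p) $ i)
                     - delta $ i * p $ i / q i (s $ i) = 0)))"

definition strict_convex_on :: "real set \<Rightarrow> (real \<Rightarrow> real) \<Rightarrow> bool" where
  "strict_convex_on A f \<longleftrightarrow> convex A \<and>
     (\<forall>x\<in>A. \<forall>y\<in>A. x \<noteq> y \<longrightarrow> (\<forall>u. 0 < u \<and> u < 1 \<longrightarrow>
        f ((1 - u) * x + u * y) < (1 - u) * f x + u * f y))"

definition objective ::
  "real^'n \<Rightarrow> real^'n \<Rightarrow> real^'n^'n \<Rightarrow> ('n \<Rightarrow> real \<Rightarrow> real) \<Rightarrow> (real^'n \<Rightarrow> real)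
   \<Rightarrow> real^'n \<Rightarrow> real \<Rightarrow> real^'n \<Rightarrow> real" where
  "objective lam delta B q w c eps s = w s + c \<bullet> pbar lam delta B q eps s"

text \<open>F*_eps = min over S of the objective (stated as an infimum; attainment is assumed
  in the theorem, so this is the minimum).\<close>
definition Fstar ::
  "real^'n \<Rightarrow> real^'n \<Rightarrow> real^'n^'n \<Rightarrow> ('n \<Rightarrow> real \<Rightarrow> real) \<Rightarrow> (real^'n \<Rightarrow> real)
   \<Rightarrow> real^'n \<Rightarrow> (real^'n) set \<Rightarrow> real \<Rightarrow> real" where
  "Fstar lam delta B q w c S eps = (INF s\<in>S. objective lam delta B q w c eps s)"

end

(*
  Write q = q(s) and f(p) = (1 - p) o q o (lam + B p) - delta o p.  This field is cooperative
  (f_i is nondecreasing in p_j for j ~= i), so its flow on [0,1]^N preserves the componentwise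
  order.  Hence the trajectory from 1 decreases to an equilibrium pmax lying above every
  equilibrium.  It is the unique stable one: near pmax, solutions are trapped between the
  trajectory from 1 and a scaled copy v pmax, which is a subequilibrium because
  f(v p) = (1 - v) q o (lam + v p o B p) at an equilibrium p; and every smaller equilibrium p
  repels, since f is concave along the segment from p to pmax.  So pbar^0(s) = pmax.

  For eps > 0, multiplying the defining equation by q shows that pbar^eps(s) is the positive
  equilibrium of the field with lam + eps 1 in place of lam: pmax is positive there, and a positive
  equilibrium p lies above (min p) pmax, which by the scaling identity forces p = pmax.  Comparing
  the trajectories from 1 shows that pmax is monotone in lam, so for c >= 0 the objective, and
  with it its minimum over S, is nondecreasing in eps.
*)

theory Submission
  imports Defs
begin

section \<open>Picard iteration for bounded Lipschitz fields\<close>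

locale bounded_lipschitz_field =
  fixes F :: "'a::banach \<Rightarrow> 'a" and L M :: real
  assumes lipschitz: "L-lipschitz_on UNIV F"
    and bounded: "\<And>u. norm (F u) \<le> M"
begin

lemma norm_diff_le: "norm (F u - F v) \<le> L * norm (u - v)"
  using lipschitz by (rule lipschitz_on_normD) auto

lemma lipschitz_nonneg: "0 \<le> L"
  using lipschitz by (rule lipschitz_on_nonneg)

lemma bound_nonneg: "0 \<le> M"
  using bounded[of 0] norm_ge_zero order.trans by blast

lemma continuous_on_F: "continuous_on S F"
  using lipschitz_on_continuous_on[OF lipschitz] continuous_on_subset by blast

primrec picard_iter :: "'a \<Rightarrow> nat \<Rightarrow> real \<Rightarrow> 'a" where
  "picard_iter y 0 = (\<lambda>t. y)"
| "picard_iter y (Suc k) = (\<lambda>t. y + integral {0..t} (\<lambda>s. F (picard_iter y k s)))"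

declare picard_iter.simps(2) [simp del]

lemma picard_iter_Suc_apply:
  "picard_iter y (Suc k) t = y + integral {0..t} (\<lambda>s. F (picard_iter y k s))"
  by (simp add: picard_iter.simps(2))

lemma picard_iter_at_0: "picard_iter y k 0 = y"
  by (cases k) (auto simp: picard_iter_Suc_apply)

lemma continuous_on_picard_iter: "continuous_on {0..} (picard_iter y k)"
proof (induction k)
  case 0
  then show ?case by simp
next
  case (Suc k)
  let ?g = "\<lambda>s. F (picard_iter y k s)"
  have cont: "continuous_on {0..} ?g"
    using continuous_on_compose2[OF continuous_on_F Suc] by auto
  note picard_iter_Suc_apply [simp]
  have "M-lipschitz_on {0..} (picard_iter y (Suc k))"
  proof (rule lipschitz_on_leI)
    fix a b :: real assume ab: "a \<in> {0..}" "b \<in> {0..}" "a \<le> b"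
    have "integral {0..a} ?g + integral {a..b} ?g = integral {0..b} ?g"
      using ab by (intro Henstock_Kurzweil_Integration.integral_combine
          integrable_continuous_interval continuous_on_subset[OF cont]) auto
    then have "picard_iter y (Suc k) b - picard_iter y (Suc k) a = integral {a..b} ?g"
      by (simp add: algebra_simps)
    then have "dist (picard_iter y (Suc k) a) (picard_iter y (Suc k) b) = norm (integral {a..b} ?g)"
      by (metis dist_commute dist_norm)
    also have "\<dots> \<le> M * (b - a)"
      using ab by (intro integral_bound continuous_on_subset[OF cont]) (auto simp: bounded)
    finally show "dist (picard_iter y (Suc k) a) (picard_iter y (Suc k) b) \<le> M * dist a b"
      using ab by (simp add: dist_real_def)
  qed (rule bound_nonneg)
  then show ?case by (rule lipschitz_on_continuous_on)
qed

lemma continuous_on_F_picard_iter: "continuous_on {0..t} (\<lambda>s. F (picard_iter y k s))"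
  using continuous_on_compose2[OF continuous_on_F continuous_on_picard_iter]
  by (rule continuous_on_subset) auto

lemma norm_picard_iter_step_le:
  "0 \<le> t \<Longrightarrow> norm (picard_iter y (Suc k) t - picard_iter y k t) \<le> M * L^k * t^(Suc k) / fact (Suc k)"
proof (induction k arbitrary: t)
  case 0
  then show ?case using bounded[of y]
    by (simp add: picard_iter_Suc_apply mult_left_mono mult.commute[of M])
next
  case (Suc k)
  define C where "C = L * (M * L^k / fact (Suc k))"
  have integral_power: "((\<lambda>s. C * s^(Suc k)) has_integral (C * t^(Suc (Suc k)) / Suc (Suc k))) {0..t}"
  proof -
    have "((\<lambda>s. C * s^(Suc k)) has_integral
        (C * t^(Suc (Suc k)) / Suc (Suc k) - C * 0^(Suc (Suc k)) / Suc (Suc k))) {0..t}"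
    proof (rule fundamental_theorem_of_calculus)
      show "((\<lambda>s. C * s^(Suc (Suc k)) / Suc (Suc k)) has_vector_derivative C * s^(Suc k))
          (at s within {0..t})" for s
        unfolding has_real_derivative_iff_has_vector_derivative[symmetric]
        by (rule derivative_eq_intros refl | simp)+
    qed (use Suc.prems in auto)
    then show ?thesis by simp
  qed
  have "picard_iter y (Suc (Suc k)) t - picard_iter y (Suc k) t
      = integral {0..t} (\<lambda>s. F (picard_iter y (Suc k) s) - F (picard_iter y k s))"
    unfolding picard_iter_Suc_apply[of y "Suc k" t] picard_iter_Suc_apply[of y k t]
    by (simp add: integral_diff integrable_continuous_interval continuous_on_F_picard_iter)
  also have "norm \<dots> \<le> integral {0..t} (\<lambda>s. C * s^(Suc k))"
  proof (rule integral_norm_bound_integral)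
    fix s assume s: "s \<in> {0..t}"
    have "norm (F (picard_iter y (Suc k) s) - F (picard_iter y k s))
        \<le> L * norm (picard_iter y (Suc k) s - picard_iter y k s)"
      by (rule norm_diff_le)
    also have "\<dots> \<le> L * (M * L^k * s^(Suc k) / fact (Suc k))"
      using Suc.IH[of s] s lipschitz_nonneg by (intro mult_left_mono) auto
    also have "\<dots> = C * s^(Suc k)"
      by (simp add: C_def)
    finally show "norm (F (picard_iter y (Suc k) s) - F (picard_iter y k s)) \<le> C * s^(Suc k)" .
  next
    show "(\<lambda>s. F (picard_iter y (Suc k) s) - F (picard_iter y k s)) integrable_on {0..t}"
      by (intro integrable_diff integrable_continuous_interval continuous_on_F_picard_iter)
    show "(\<lambda>s. C * s^(Suc k)) integrable_on {0..t}"
      using integral_power by blast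
  qed
  also have "\<dots> = M * L ^ Suc k * t ^ Suc (Suc k) / fact (Suc (Suc k))"
    using integral_unique[OF integral_power] by (simp add: C_def field_simps)
  finally show ?case .
qed

lemma uniform_limit_picard_iter:
  assumes "0 \<le> T"
  shows "uniform_limit {0..T} (picard_iter y)
           (\<lambda>t. y + (\<Sum>j. picard_iter y (Suc j) t - picard_iter y j t)) sequentially"
proof -
  define m where "m j = M * L^j * T^(Suc j) / fact (Suc j)" for j
  have step_le: "norm (picard_iter y (Suc j) t - picard_iter y j t) \<le> m j" if "t \<in> {0..T}" for j t
  proof -
    have "norm (picard_iter y (Suc j) t - picard_iter y j t) \<le> M * L^j * t^(Suc j) / fact (Suc j)"
      using that by (intro norm_picard_iter_step_le) auto
    also have "\<dots> \<le> m j" unfolding m_def using that bound_nonneg lipschitz_nonneg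
      by (intro divide_right_mono mult_left_mono power_mono) auto
    finally show ?thesis .
  qed
  have "summable m"
  proof (rule summable_comparison_test')
    show "summable (\<lambda>j. M * T * ((L*T)^j /\<^sub>R fact j))"
      by (intro summable_mult summable_exp_generic)
    fix j :: nat
    have "m j = M * T * ((L*T)^j / fact (Suc j))"
      by (simp add: m_def power_mult_distrib field_simps)
    also have "\<dots> \<le> M * T * ((L*T)^j / fact j)"
      using bound_nonneg assms lipschitz_nonneg
      by (intro mult_left_mono divide_left_mono) (auto simp: fact_mono)
    finally show "norm (m j) \<le> M * T * ((L*T)^j /\<^sub>R fact j)"
      using bound_nonneg assms lipschitz_nonneg by (simp add: m_def divide_inverse_commute)
  qed
  note partial_sums = uniform_limit_add[OF uniform_limit_const[of "\<lambda>t. y"]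
      Weierstrass_m_test[where A="{0..T}" and f="\<lambda>j t. picard_iter y (Suc j) t - picard_iter y j t", OF step_le this]]
  have "y + (\<Sum>j<n. picard_iter y (Suc j) t - picard_iter y j t) = picard_iter y n t" for n t
    using sum_lessThan_telescope[of "\<lambda>j. picard_iter y j t" n] by (simp add: picard_iter_at_0)
  with partial_sums show ?thesis by simp
qed

theorem exists_solution:
  "\<exists>x. x 0 = y \<and> (\<forall>t\<ge>0. (x has_vector_derivative F (x t)) (at t within {0..}))"
proof -
  define x where "x = (\<lambda>t. y + (\<Sum>j. picard_iter y (Suc j) t - picard_iter y j t))"
  have lim: "uniform_limit {0..T} (picard_iter y) x sequentially" if "0 \<le> T" for T
    unfolding x_def using that by (rule uniform_limit_picard_iter)
  have cont_Fx: "continuous_on {0..T} (\<lambda>s. F (x s))" if "0 \<le> T" for T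
  proof -
    have "continuous_on {0..T} x"
      by (rule uniform_limit_theorem[OF _ lim[OF that]])
        (auto intro!: always_eventually continuous_on_subset[OF continuous_on_picard_iter])
    then show ?thesis
      using continuous_on_compose2[OF continuous_on_F] by blast
  qed
  have integral_eq: "x t = y + integral {0..t} (\<lambda>s. F (x s))" if t: "0 \<le> t" for t
  proof -
    have "uniform_limit {0..t} (\<lambda>n s. F (picard_iter y n s)) (F \<circ> x) sequentially"
      by (rule uniform_limit_compose[OF lim[OF t] lipschitz_on_uniformly_continuous[OF lipschitz]])
        auto
    then obtain I J where I: "\<And>n. ((\<lambda>s. F (picard_iter y n s)) has_integral I n) {0..t}"
      and J: "((F \<circ> x) has_integral J) {0..t}" and IJ: "I \<longlonglongrightarrow> J"
      by (rule uniform_limit_integral) (auto intro: continuous_on_F_picard_iter)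
    have "(\<lambda>n. picard_iter y (Suc n) t) = (\<lambda>n. y + I n)"
      using I by (auto simp: picard_iter_Suc_apply integral_unique)
    then have "(\<lambda>n. picard_iter y (Suc n) t) \<longlonglongrightarrow> y + J"
      using IJ by (simp add: tendsto_add)
    moreover have "(\<lambda>n. picard_iter y (Suc n) t) \<longlonglongrightarrow> x t"
      using LIMSEQ_Suc[OF tendsto_uniform_limitI[OF lim[OF t]]] t by auto
    ultimately show ?thesis
      using J LIMSEQ_unique by (fastforce simp: o_def integral_unique)
  qed
  have "(x has_vector_derivative F (x t)) (at t within {0..})" if t: "0 \<le> t" for t
  proof -
    have "((\<lambda>u. y + integral {0..u} (\<lambda>s. F (x s))) has_vector_derivative F (x t))
        (at t within {0..t+1})"
      using integral_has_vector_derivative[OF cont_Fx, of "t + 1" t] t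
      by (auto intro!: derivative_eq_intros)
    then have "(x has_vector_derivative F (x t)) (at t within {0..t+1})"
      by (rule has_vector_derivative_transform[rotated 2]) (use t integral_eq in auto)
    moreover have "at t within {0..t+1} = at t within {0..}"
      by (rule at_within_nhd[of _ "{..<t+1}"]) auto
    ultimately show ?thesis by simp
  qed
  moreover have "x 0 = y"
    by (simp add: x_def picard_iter_at_0)
  ultimately show ?thesis by blast
qed

end

lemma clamp_nth_cart:
  fixes lo hi u :: "real^'n"
  assumes "lo \<le> hi"
  shows "clamp lo hi u $ j = max (lo$j) (min (hi$j) (u$j))"
proof -
  have "\<forall>i\<in>Basis. lo \<bullet> i \<le> hi \<bullet> i"
    using assms by (auto simp: Basis_vec_def inner_axis less_eq_vec_def)
  then have "clamp lo hi u $ j = (if u$j < lo$j then lo$j else if u$j \<le> hi$j then u$j else hi$j)"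
    unfolding clamp_def cart_eq_inner_axis[of _ j] by simp
  moreover have "lo$j \<le> hi$j"
    using assms by (simp add: less_eq_vec_def)
  ultimately show ?thesis
    by (auto simp: max_def min_def)
qed

lemma exists_solution_clamped:
  fixes F :: "real^'n \<Rightarrow> real^'n"
  assumes "L-lipschitz_on {lo..hi} F" "lo \<le> hi"
  shows "\<exists>x. x 0 = y \<and> (\<forall>t\<ge>0. (x has_vector_derivative F (clamp lo hi (x t))) (at t within {0..}))"
proof -
  have clamp_in: "clamp lo hi u \<in> {lo..hi}" for u
    using assms(2) by (auto simp: clamp_nth_cart less_eq_vec_def)
  have "1-lipschitz_on UNIV (clamp lo hi)"
    by (rule lipschitz_onI) (auto simp: dist_commute intro: dist_clamps_le_dist_args)
  then have "(L * 1)-lipschitz_on UNIV (\<lambda>u. F (clamp lo hi u))"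
    by (rule lipschitz_on_compose2) (rule lipschitz_on_subset[OF assms(1)], use clamp_in in auto)
  moreover obtain M where "\<forall>u\<in>{lo..hi}. norm (F u) \<le> M"
  proof -
    have "bounded (F ` {lo..hi})"
      using lipschitz_on_continuous_on[OF assms(1)] unfolding interval_cbox_cart
      by (intro compact_imp_bounded compact_continuous_image compact_cbox)
    then show ?thesis using that by (auto simp: bounded_iff)
  qed
  ultimately interpret bounded_lipschitz_field "\<lambda>u. F (clamp lo hi u)" "L * 1" M
    using clamp_in by unfold_locales auto
  show ?thesis
    by (rule exists_solution)
qed

section \<open>Differential inequalities and monotone limits\<close>

lemma has_real_derivative_pos_part_square:
  "((\<lambda>u::real. (max 0 u)^2) has_real_derivative 2 * max 0 x) (at x)"
proof (cases x "0::real" rule: linorder_cases)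
  case less
  have "((\<lambda>u::real. 0) has_real_derivative 2 * max 0 x) (at x)" using less by simp
  then show ?thesis
    by (rule has_field_derivative_transform_within_open[of _ _ _ "{..<0}"]) (use less in auto)
next
  case equal
  have "((\<lambda>u::real. (max 0 u)^2 / u) \<longlongrightarrow> 0) (at 0)"
  proof (rule Lim_null_comparison)
    show "\<forall>\<^sub>F u in at 0. norm ((max 0 u)^2 / u) \<le> \<bar>u\<bar>"
      by (intro always_eventually) (auto simp: max_def power2_eq_square)
  qed (auto intro: tendsto_rabs_zero tendsto_ident_at)
  then show ?thesis using equal by (simp add: has_field_derivative_iff)
next
  case greater
  have "((\<lambda>u::real. u^2) has_real_derivative 2 * max 0 x) (at x)"
    using greater by (auto intro!: derivative_eq_intros)
  then show ?thesis
    by (rule has_field_derivative_transform_within_open[of _ _ _ "{0<..}"]) (use greater in auto)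
qed

lemma has_real_derivative_pos_part_square_comp:
  assumes "(g has_real_derivative g') (at t within S)"
  shows "((\<lambda>t. (max 0 (g t))^2) has_real_derivative 2 * max 0 (g t) * g') (at t within S)"
  using DERIV_chain2[OF has_real_derivative_pos_part_square assms] by simp

lemma antimono_if_deriv_nonpos:
  fixes g g' :: "real \<Rightarrow> real"
  assumes deriv: "\<And>t. 0 \<le> t \<Longrightarrow> (g has_real_derivative g' t) (at t within {0..})"
    and nonpos: "\<And>t. T \<le> t \<Longrightarrow> g' t \<le> 0"
    and "0 \<le> T" "T \<le> t1" "t1 \<le> t2"
  shows "g t2 \<le> g t1"
proof (rule DERIV_nonpos_imp_decreasing_open[OF \<open>t1 \<le> t2\<close>])
  fix t assume t: "t1 < t" "t < t2"
  have "at t within {0..} = at t"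
    by (rule at_within_nhd[of _ "{0<..}"]) (use t assms in auto)
  then show "\<exists>y. (g has_real_derivative y) (at t) \<and> y \<le> 0"
    using deriv[of t] nonpos[of t] t assms by auto
next
  have "continuous_on {0..} g"
    using deriv by (auto simp: continuous_on_eq_continuous_within intro: DERIV_continuous)
  then show "continuous_on {t1..t2} g"
    by (rule continuous_on_subset) (use assms in auto)
qed

lemma nonpos_if_deriv_nonpos_where_pos:
  fixes g g' :: "real \<Rightarrow> real"
  assumes deriv: "\<And>t. 0 \<le> t \<Longrightarrow> (g has_real_derivative g' t) (at t within {0..})"
    and inward: "\<And>t. 0 \<le> t \<Longrightarrow> 0 < g t \<Longrightarrow> g' t \<le> 0"
    and "g 0 \<le> 0" "0 \<le> t"
  shows "g t \<le> 0"
proof -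
  have "(max 0 (g t))^2 \<le> (max 0 (g 0))^2"
  proof (rule antimono_if_deriv_nonpos[where g = "\<lambda>t. (max 0 (g t))^2"
        and g' = "\<lambda>t. 2 * max 0 (g t) * g' t"])
    show "((\<lambda>t. (max 0 (g t))^2) has_real_derivative 2 * max 0 (g t) * g' t) (at t within {0..})"
      if "0 \<le> t" for t
      using has_real_derivative_pos_part_square_comp[OF deriv[OF that]] .
    show "2 * max 0 (g t) * g' t \<le> 0" if "0 \<le> t" for t
      using inward[OF that] by (cases "0 < g t") (auto simp: mult_nonneg_nonpos)
  qed (use assms in auto)
  then show ?thesis using \<open>g 0 \<le> 0\<close> by simp
qed

lemma gronwall_differential:
  fixes phi phi' :: "real \<Rightarrow> real"
  assumes deriv: "\<And>t. 0 \<le> t \<Longrightarrow> (phi has_real_derivative phi' t) (at t within {0..})"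
    and bound: "\<And>t. 0 \<le> t \<Longrightarrow> phi' t \<le> K * phi t"
    and "0 \<le> t"
  shows "phi t \<le> phi 0 * exp (K * t)"
proof -
  have "exp (- K * t) * phi t \<le> exp (- K * 0) * phi 0"
  proof (rule antimono_if_deriv_nonpos[where g = "\<lambda>s. exp (- K * s) * phi s"
        and g' = "\<lambda>s. exp (- K * s) * (phi' s - K * phi s)"])
    fix s :: real assume s: "0 \<le> s"
    show "((\<lambda>s. exp (- K * s) * phi s) has_real_derivative exp (- K * s) * (phi' s - K * phi s))
        (at s within {0..})"
      using deriv[OF s] by (auto intro!: derivative_eq_intros simp: algebra_simps)
    show "exp (- K * s) * (phi' s - K * phi s) \<le> 0"
      using bound[OF s] by (simp add: mult_nonneg_nonpos)
  qed (use assms in auto)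
  then have "exp (K * t) * (exp (- K * t) * phi t) \<le> exp (K * t) * phi 0"
    by simp
  then show ?thesis
    by (simp add: exp_minus field_simps)
qed

lemma deriv_limit_nonpos_if_convergent:
  fixes g g' :: "real \<Rightarrow> real"
  assumes deriv: "\<And>t. 0 \<le> t \<Longrightarrow> (g has_real_derivative g' t) (at t within {0..})"
    and g: "(g \<longlongrightarrow> l) at_top" and g': "(g' \<longlongrightarrow> c) at_top"
  shows "c \<le> 0"
proof (rule ccontr)
  assume "\<not> c \<le> 0"
  then have c: "0 < c / 2" "c / 2 < c" by auto
  obtain T0 where T0: "\<And>t. T0 \<le> t \<Longrightarrow> c / 2 < g' t"
    using order_tendstoD(1)[OF g' c(2)] by (auto simp: eventually_at_top_linorder)
  have "\<forall>\<^sub>F t in at_top. l - 1 < g t \<and> g t < l + 1"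
    using order_tendstoD[OF g, of "l - 1"] order_tendstoD[OF g, of "l + 1"] by (auto intro: eventually_conj)
  then obtain T1 where T1: "\<And>t. T1 \<le> t \<Longrightarrow> l - 1 < g t \<and> g t < l + 1"
    by (auto simp: eventually_at_top_linorder)
  define T where "T = max 0 (max T0 T1)"
  define t where "t = T + 4 / c"
  have "(c / 2) * t - g t \<le> (c / 2) * T - g T"
    by (rule antimono_if_deriv_nonpos[where g' = "\<lambda>s. c / 2 - g' s" and T = T])
      (use T0 c in \<open>auto simp: T_def t_def intro!: derivative_eq_intros deriv less_imp_le\<close>)
  moreover have "(c / 2) * (t - T) = 2"
    using c by (simp add: t_def field_simps)
  moreover have "T1 \<le> T" "T1 \<le> t"
    using c by (auto simp: T_def t_def add_increasing2)
  then have "l - 1 < g T" "g t < l + 1"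
    using T1 by auto
  ultimately show False by (simp add: algebra_simps)
qed

lemma deriv_limit_zero_if_convergent:
  fixes g g' :: "real \<Rightarrow> real"
  assumes deriv: "\<And>t. 0 \<le> t \<Longrightarrow> (g has_real_derivative g' t) (at t within {0..})"
    and "(g \<longlongrightarrow> l) at_top" "(g' \<longlongrightarrow> c) at_top"
  shows "c = 0"
proof -
  have "c \<le> 0"
    using deriv_limit_nonpos_if_convergent assms by blast
  moreover have "- c \<le> 0"
    by (rule deriv_limit_nonpos_if_convergent[where g = "\<lambda>t. - g t" and g' = "\<lambda>t. - g' t"])
      (use assms in \<open>auto intro!: derivative_eq_intros tendsto_minus\<close>)
  ultimately show ?thesis by simp
qed

lemma antimono_bounded_tendsto_Inf:
  fixes g :: "real \<Rightarrow> real"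
  assumes antimono: "\<And>s t. 0 \<le> s \<Longrightarrow> s \<le> t \<Longrightarrow> g t \<le> g s"
    and bounded: "\<And>t. 0 \<le> t \<Longrightarrow> b \<le> g t"
  shows "(g \<longlongrightarrow> Inf (g ` {0..})) at_top"
proof (rule order_tendstoI)
  have bdd: "bdd_below (g ` {0..})"
    using bounded by (auto intro!: bdd_belowI[of _ b])
  have lower: "Inf (g ` {0..}) \<le> g t" if "0 \<le> t" for t
    by (rule cInf_lower[OF _ bdd]) (use that in auto)
  fix y assume "y < Inf (g ` {0..})"
  then show "\<forall>\<^sub>F t in at_top. y < g t"
    unfolding eventually_at_top_linorder using lower by (intro exI[of _ 0]) (auto intro: less_le_trans)
next
  fix y assume "Inf (g ` {0..}) < y"
  then obtain t0 where "t0 \<in> {0..}" "g t0 < y"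
    using cInf_lessD[of "g ` {0..}" y] by auto
  then show "\<forall>\<^sub>F t in at_top. g t < y"
    unfolding eventually_at_top_linorder using antimono by (intro exI[of _ t0]) (auto intro: le_less_trans)
qed

lemma antimono_bounded_convergent:
  fixes x :: "real \<Rightarrow> real^'n"
  assumes "\<And>s t. 0 \<le> s \<Longrightarrow> s \<le> t \<Longrightarrow> x t \<le> x s" "\<And>t. 0 \<le> t \<Longrightarrow> b \<le> x t"
  shows "\<exists>l. (x \<longlongrightarrow> l) at_top"
proof
  show "(x \<longlongrightarrow> (\<chi> i. Inf ((\<lambda>t. x t $ i) ` {0..}))) at_top"
    using antimono_bounded_tendsto_Inf[of "\<lambda>t. x t $ i" "b $ i" for i] assms
    by (intro vec_tendstoI) (auto simp: less_eq_vec_def)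
qed

lemma mono_bounded_convergent:
  fixes x :: "real \<Rightarrow> real^'n"
  assumes "\<And>s t. 0 \<le> s \<Longrightarrow> s \<le> t \<Longrightarrow> x s \<le> x t" "\<And>t. 0 \<le> t \<Longrightarrow> x t \<le> b"
  shows "\<exists>l. (x \<longlongrightarrow> l) at_top"
proof -
  obtain l where "((\<lambda>t. - x t) \<longlongrightarrow> l) at_top"
    using antimono_bounded_convergent[of "\<lambda>t. - x t" "- b"] assms by auto
  then have "(x \<longlongrightarrow> - l) at_top"
    using tendsto_minus[of "\<lambda>t. - x t" l] by simp
  then show ?thesis ..
qed

lemma tendsto_vec_le:
  fixes x z :: "'a \<Rightarrow> real^'n"
  assumes "(x \<longlongrightarrow> l) F" "(z \<longlongrightarrow> m) F" "F \<noteq> bot" "\<forall>\<^sub>F t in F. x t \<le> z t"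
  shows "l \<le> m"
  unfolding less_eq_vec_def
proof
  fix i
  show "l $ i \<le> m $ i"
    using assms(4) by (intro tendsto_le[OF assms(3) tendsto_vec_nth[OF assms(2)] tendsto_vec_nth[OF assms(1)]])
      (auto simp: less_eq_vec_def elim: eventually_mono)
qed

lemma solution_in: "is_solution F X x \<Longrightarrow> 0 \<le> t \<Longrightarrow> x t \<in> X"
  by (simp add: is_solution_def)

lemma solution_has_derivative_nth:
  assumes "is_solution F X x" "0 \<le> t"
  shows "((\<lambda>t. x t $ i) has_real_derivative F (x t) $ i) (at t within {0..})"
  using bounded_linear.has_vector_derivative[OF bounded_linear_vec_nth, of x "F (x t)"] assms
  by (simp add: is_solution_def has_real_derivative_iff_has_vector_derivative)

lemma solution_shift:
  assumes x: "is_solution F X x" and "0 \<le> h"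
  shows "is_solution F X (\<lambda>t. x (t + h))"
  unfolding is_solution_def
proof (intro allI impI conjI)
  fix t :: real assume "0 \<le> t"
  have "(x has_vector_derivative F (x (t + h))) (at (t + h) within {0..})"
    using x \<open>0 \<le> t\<close> \<open>0 \<le> h\<close> by (simp add: is_solution_def)
  then have "(x has_vector_derivative F (x (t + h))) (at (t + h) within (\<lambda>t. t + h) ` {0..})"
    by (rule has_vector_derivative_within_subset) (use \<open>0 \<le> h\<close> in auto)
  moreover have "((\<lambda>t. t + h) has_vector_derivative 1) (at t within {0..})"
    by (auto intro!: derivative_eq_intros)
  ultimately show "((\<lambda>t. x (t + h)) has_vector_derivative F (x (t + h))) (at t within {0..})"
    using vector_diff_chain_within by (fastforce simp: o_def)
  show "x (t + h) \<in> X" using x \<open>0 \<le> t\<close> \<open>0 \<le> h\<close> by (simp add: is_solution_def)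
qed

section \<open>The SIS vector field\<close>

definition sis_rhs :: "real^'n \<Rightarrow> real^'n \<Rightarrow> real^'n \<Rightarrow> real^'n^'n \<Rightarrow> real^'n \<Rightarrow> real^'n" where
  "sis_rhs lam a d B x = (\<chi> i. (1 - x$i) * a$i * (lam$i + (B *v x)$i) - d$i * x$i)"

lemma sis_rhs_nth [simp]:
  "sis_rhs lam a d B x $ i = (1 - x$i) * a$i * (lam$i + (B *v x)$i) - d$i * x$i"
  by (simp add: sis_rhs_def)

lemma mult_vec_nth_mono:
  fixes B :: "real^'m^'n"
  assumes "\<forall>j. 0 \<le> B$i$j" "x \<le> y"
  shows "(B *v x) $ i \<le> (B *v y) $ i"
  using assms by (auto simp: matrix_vector_mult_def less_eq_vec_def intro!: sum_mono mult_left_mono)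

lemma mult_vec_nth_nonneg:
  fixes B :: "real^'m^'n"
  assumes "\<forall>j. 0 \<le> B$i$j" "\<forall>j. 0 \<le> x$j"
  shows "0 \<le> (B *v x) $ i"
  using assms by (auto simp: matrix_vector_mult_def intro!: sum_nonneg mult_nonneg_nonneg)

lemma mult_vec_scaleR_nth: "(B *v (v *\<^sub>R x)) $ i = v * (B *v x) $ i"
  by (simp add: matrix_vector_mult_def sum_distrib_left algebra_simps)

lemma sis_rhs_nth_mono:
  assumes "\<forall>j. 0 \<le> B$i$j" "0 \<le> a$i" "x \<le> y" "x$i = y$i" "x$i \<le> 1"
  shows "sis_rhs lam a d B x $ i \<le> sis_rhs lam a d B y $ i"
proof -
  have "(1 - x$i) * a$i * (lam$i + (B *v x)$i) \<le> (1 - x$i) * a$i * (lam$i + (B *v y)$i)"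
    using assms mult_vec_nth_mono[of B i x y] by (intro mult_left_mono) auto
  then show ?thesis using assms by simp
qed

lemma sis_rhs_nth_mono_lam:
  assumes "lam1$i \<le> lam2$i" "0 \<le> a$i" "x$i \<le> 1"
  shows "sis_rhs lam1 a d B x $ i \<le> sis_rhs lam2 a d B x $ i"
  using assms by (simp add: mult_left_mono)

lemma sis_rhs_scaleR_nth:
  assumes "sis_rhs lam a d B p $ i = 0"
  shows "sis_rhs lam a d B (v *\<^sub>R p) $ i = a$i * (1 - v) * (lam$i + v * p$i * (B *v p)$i)"
proof -
  have dp: "d$i * p$i = (1 - p$i) * a$i * (lam$i + (B *v p)$i)"
    using assms by simp
  have "sis_rhs lam a d B (v *\<^sub>R p) $ i
      = (1 - v * p$i) * a$i * (lam$i + v * (B *v p)$i) - v * (d$i * p$i)"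
    by (simp add: mult_vec_scaleR_nth)
  also have "\<dots> = (1 - v * p$i) * a$i * (lam$i + v * (B *v p)$i)
      - v * ((1 - p$i) * a$i * (lam$i + (B *v p)$i))"
    by (simp only: dp)
  finally show ?thesis by (simp add: algebra_simps)
qed

lemma sis_rhs_nth_concave:
  assumes "\<forall>j. 0 \<le> B$i$j" "0 \<le> a$i" "\<forall>j. 0 \<le> v$j" "0 \<le> \<tau>" "\<tau> \<le> 1"
  shows "(1 - \<tau>) * sis_rhs lam a d B p $ i + \<tau> * sis_rhs lam a d B (p + v) $ i
           \<le> sis_rhs lam a d B (p + \<tau> *\<^sub>R v) $ i"
proof -
  have "sis_rhs lam a d B (p + \<tau> *\<^sub>R v) $ i
      - ((1 - \<tau>) * sis_rhs lam a d B p $ i + \<tau> * sis_rhs lam a d B (p + v) $ i)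
      = a$i * \<tau> * (1 - \<tau>) * v$i * (B *v v)$i"
    by (simp add: matrix_vector_right_distrib mult_vec_scaleR_nth algebra_simps)
  moreover have "0 \<le> a$i * \<tau> * (1 - \<tau>) * v$i * (B *v v)$i"
    using assms mult_vec_nth_nonneg[of B i v] by simp
  ultimately show ?thesis by simp
qed

lemma sis_rhs_diff_nth_le:
  assumes B: "\<forall>j. 0 \<le> B$i$j" and "0 \<le> a$i" "0 \<le> d$i" "0 \<le> lam$i"
    and "x \<in> prob_box" "z \<in> prob_box" "z$i \<le> x$i"
  shows "sis_rhs lam a d B x $ i - sis_rhs lam a d B z $ i \<le> a$i * (\<Sum>j\<in>UNIV. B$i$j * max 0 (x$j - z$j))"
proof -
  let ?m = "\<Sum>j\<in>UNIV. B$i$j * max 0 (x$j - z$j)"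
  have "(B *v x)$i - (B *v z)$i \<le> ?m"
    using B by (auto simp: matrix_vector_mult_def sum_subtractf[symmetric] right_diff_distrib[symmetric]
        intro!: sum_mono mult_left_mono)
  moreover have "0 \<le> ?m" using B by (intro sum_nonneg) auto
  moreover have "0 \<le> (B *v z)$i"
    using assms by (intro mult_vec_nth_nonneg) (auto simp: prob_box_def)
  moreover have "0 \<le> 1 - x$i" "1 - x$i \<le> 1"
    using assms by (auto simp: prob_box_def)
  ultimately have "(1 - x$i) * ((B *v x)$i - (B *v z)$i) \<le> ?m"
    by (meson mult_left_le_one_le mult_left_mono order_trans)
  moreover have "0 \<le> (x$i - z$i) * (lam$i + (B *v z)$i)"
    using assms \<open>0 \<le> (B *v z)$i\<close> by simp
  ultimately have "(1 - x$i) * ((B *v x)$i - (B *v z)$i) - (x$i - z$i) * (lam$i + (B *v z)$i) \<le> ?m"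
    by linarith
  then have "a$i * ((1 - x$i) * ((B *v x)$i - (B *v z)$i) - (x$i - z$i) * (lam$i + (B *v z)$i))
      \<le> a$i * ?m"
    using assms by (intro mult_left_mono) auto
  moreover have "0 \<le> d$i * (x$i - z$i)" using assms by simp
  ultimately show ?thesis by (simp add: algebra_simps)
qed

lemma sis_rhs_diff_nth_abs_le:
  assumes "\<forall>j. 0 \<le> B$i$j" "0 \<le> a$i" "0 \<le> d$i" "0 \<le> lam$i" "x \<in> prob_box" "y \<in> prob_box"
  shows "\<bar>sis_rhs lam a d B x $ i - sis_rhs lam a d B y $ i\<bar>
           \<le> (a$i * (2 * (\<Sum>j\<in>UNIV. B$i$j) + lam$i) + d$i) * norm (x - y)"
proof -
  let ?r = "\<Sum>j\<in>UNIV. B$i$j" and ?n = "norm (x - y)"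
  have comp: "\<bar>x$j - y$j\<bar> \<le> ?n" for j
    using component_le_norm_cart[of "x - y" j] by simp
  have "\<bar>(B *v x)$i - (B *v y)$i\<bar> \<le> (\<Sum>j\<in>UNIV. B$i$j * \<bar>x$j - y$j\<bar>)"
    using assms(1) by (auto simp: matrix_vector_mult_def sum_subtractf[symmetric]
        right_diff_distrib[symmetric] abs_mult intro: order_trans[OF sum_abs])
  also have "\<dots> \<le> ?r * ?n"
    using assms(1) comp by (auto simp: sum_distrib_right intro!: sum_mono mult_left_mono)
  finally have Bx: "\<bar>(B *v x)$i - (B *v y)$i\<bar> \<le> ?r * ?n" .
  have By: "0 \<le> (B *v y)$i" "(B *v y)$i \<le> ?r"
    using assms by (auto simp: matrix_vector_mult_def prob_box_def
        intro!: sum_nonneg sum_mono mult_right_le_one_le)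
  have "\<bar>(1 - x$i) * ((B *v x)$i - (B *v y)$i)\<bar> \<le> ?r * ?n"
    using Bx assms(5) by (auto simp: abs_mult prob_box_def intro: order_trans[OF mult_left_le_one_le])
  moreover have "\<bar>(x$i - y$i) * (lam$i + (B *v y)$i)\<bar> \<le> ?n * (lam$i + ?r)"
    using comp[of i] By assms(4) by (simp add: abs_mult) (intro mult_mono, auto)
  ultimately have "\<bar>(1 - x$i) * ((B *v x)$i - (B *v y)$i) - (x$i - y$i) * (lam$i + (B *v y)$i)\<bar>
      \<le> (2 * ?r + lam$i) * ?n"
    by (auto simp: algebra_simps intro: order_trans[OF abs_triangle_ineq4])
  then have "\<bar>a$i * ((1 - x$i) * ((B *v x)$i - (B *v y)$i) - (x$i - y$i) * (lam$i + (B *v y)$i))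
      - d$i * (x$i - y$i)\<bar> \<le> a$i * ((2 * ?r + lam$i) * ?n) + d$i * ?n"
    using assms(2,3) comp[of i]
    by (auto simp: abs_mult intro!: order_trans[OF abs_triangle_ineq4] add_mono mult_left_mono)
  then show ?thesis by (simp add: algebra_simps)
qed

lemma sis_rhs_lipschitz:
  fixes lam a d :: "real^'n" and B :: "real^'n^'n"
  assumes "\<forall>i j. 0 \<le> B$i$j" "\<forall>i. 0 \<le> a$i" "\<forall>i. 0 \<le> d$i" "\<forall>i. 0 \<le> lam$i"
  shows "\<exists>L. L-lipschitz_on prob_box (sis_rhs lam a d B)"
proof -
  define L where "L = (\<Sum>i\<in>UNIV. a$i * (2 * (\<Sum>j\<in>UNIV. B$i$j) + lam$i) + d$i)"
  have "L-lipschitz_on prob_box (sis_rhs lam a d B)"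
  proof (rule lipschitz_onI)
    fix x y :: "real^'n" assume "x \<in> prob_box" "y \<in> prob_box"
    then have "norm (sis_rhs lam a d B x - sis_rhs lam a d B y)
        \<le> (\<Sum>i\<in>UNIV. \<bar>sis_rhs lam a d B x $ i - sis_rhs lam a d B y $ i\<bar>)"
      using norm_le_l1_cart[of "sis_rhs lam a d B x - sis_rhs lam a d B y"] by simp
    also have "\<dots> \<le> (\<Sum>i\<in>UNIV. (a$i * (2 * (\<Sum>j\<in>UNIV. B$i$j) + lam$i) + d$i) * norm (x - y))"
      using assms \<open>x \<in> prob_box\<close> \<open>y \<in> prob_box\<close>
      by (intro sum_mono sis_rhs_diff_nth_abs_le) auto
    also have "\<dots> = L * norm (x - y)"
      by (simp add: L_def sum_distrib_right)
    finally show "dist (sis_rhs lam a d B x) (sis_rhs lam a d B y) \<le> L * dist x y"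
      by (simp add: dist_norm)
  next
    show "0 \<le> L"
      unfolding L_def using assms by (intro sum_nonneg add_nonneg_nonneg mult_nonneg_nonneg) auto
  qed
  then show ?thesis by blast
qed

section \<open>The maximal equilibrium\<close>

lemma prob_box_eq_interval: "prob_box = {0..(1::real^'n)}"
  by (auto simp: prob_box_def less_eq_vec_def)

lemma exists_maximal_scaling_below:
  fixes e p :: "real^'n"
  assumes "0 \<le> e" "e \<le> p" "e \<noteq> p" "v *\<^sub>R p \<le> e"
  shows "\<exists>w i. v \<le> w \<and> w < 1 \<and> 0 < p$i \<and> w *\<^sub>R p \<le> e \<and> w * p$i = e$i"
proof -
  obtain k where k: "e$k < p$k"
    using assms(2,3) by (auto simp: vec_eq_iff less_eq_vec_def order.strict_iff_order)
  define P where "P = {j. 0 < p$j}"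
  define r where "r j = e$j / p$j" for j
  define w where "w = Min (r ` P)"
  have kP: "k \<in> P"
    using k assms(1) by (auto simp: P_def less_eq_vec_def intro: le_less_trans)
  then have "w \<in> r ` P"
    unfolding w_def by (intro Min_in) auto
  then obtain i where iP: "i \<in> P" and ri: "r i = w"
    by auto
  have w_le: "w \<le> r j" if "j \<in> P" for j
    unfolding w_def using that by (intro Min_le) auto
  have "r k < 1"
    using k kP by (simp add: r_def P_def)
  then have "w < 1"
    using w_le[OF kP] by linarith
  have "v * p$i \<le> e$i"
    using assms(4) by (simp add: less_eq_vec_def)
  then have "v \<le> w"
    using iP ri[symmetric] by (simp add: r_def P_def pos_le_divide_eq)
  have "(w *\<^sub>R p)$j \<le> e$j" for j
  proof (cases "j \<in> P")
    case True
    then show ?thesis using w_le[of j] by (simp add: P_def r_def pos_le_divide_eq)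
  next
    case False
    moreover have "0 \<le> e$j" "e$j \<le> p$j"
      using assms(1,2) by (simp_all add: less_eq_vec_def)
    ultimately have "p$j = 0" "e$j = 0"
      by (auto simp: P_def)
    then show ?thesis by simp
  qed
  then have "w *\<^sub>R p \<le> e"
    by (simp add: less_eq_vec_def)
  moreover have "w * p$i = e$i"
    using ri[symmetric] iP by (simp add: r_def P_def)
  ultimately show ?thesis
    using \<open>v \<le> w\<close> \<open>w < 1\<close> iP by (auto simp: P_def)
qed

locale sis_system =
  fixes lam a d :: "real^'n" and B :: "real^'n^'n"
  assumes lam_nonneg: "\<forall>i. 0 \<le> lam$i" and a_pos: "\<forall>i. 0 < a$i"
    and d_pos: "\<forall>i. 0 < d$i" and B_nonneg: "\<forall>i j. 0 \<le> B$i$j"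
begin

abbreviation f :: "real^'n \<Rightarrow> real^'n" where
  "f \<equiv> sis_rhs lam a d B"

definition lip :: real where
  "lip = (SOME L. L-lipschitz_on prob_box f)"

lemma lipschitz_on_f: "lip-lipschitz_on prob_box f"
  unfolding lip_def
  by (rule someI_ex, rule sis_rhs_lipschitz)
    (use lam_nonneg a_pos d_pos B_nonneg in \<open>auto intro: less_imp_le\<close>)

lemma sum_pos_part_field_diff_le:
  assumes "x \<in> prob_box" "z \<in> prob_box" "y \<le> f x"
  defines "p j \<equiv> max 0 (x$j - z$j)"
  shows "(\<Sum>j\<in>UNIV. 2 * p j * (y$j - f z $ j))
           \<le> 2 * (\<Sum>j\<in>UNIV. \<Sum>k\<in>UNIV. a$j * B$j$k) * real CARD('n) * (\<Sum>j\<in>UNIV. (p j)^2)"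
proof -
  let ?C = "\<Sum>j\<in>UNIV. \<Sum>k\<in>UNIV. a$j * B$j$k"
  have aB_nonneg: "0 \<le> a$j * B$j$k" for j k
    using a_pos B_nonneg by (simp add: less_imp_le)
  have aB: "a$j * B$j$k \<le> ?C" for j k
    using member_le_sum[of j UNIV "\<lambda>j. \<Sum>k\<in>UNIV. a$j * B$j$k"]
      member_le_sum[of k UNIV "\<lambda>k. a$j * B$j$k"] aB_nonneg
    by (force intro: sum_nonneg order_trans)
  have growth: "2 * p j * (y$j - f z $ j) \<le> (\<Sum>k\<in>UNIV. 2 * (a$j * B$j$k) * (p j * p k))" for j
  proof (cases "z$j < x$j")
    case True
    then have "f x $ j - f z $ j \<le> a$j * (\<Sum>k\<in>UNIV. B$j$k * p k)"
      unfolding p_def using assms(1,2) a_pos d_pos lam_nonneg B_nonneg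
      by (intro sis_rhs_diff_nth_le) (auto intro: less_imp_le)
    moreover have "y$j \<le> f x $ j"
      using assms(3) by (simp add: less_eq_vec_def del: sis_rhs_nth)
    ultimately have "2 * p j * (y$j - f z $ j) \<le> 2 * p j * (a$j * (\<Sum>k\<in>UNIV. B$j$k * p k))"
      by (intro mult_left_mono) (auto simp: p_def simp del: sis_rhs_nth)
    then show ?thesis
      by (simp add: sum_distrib_left algebra_simps)
  qed (simp add: p_def)
  have am_gm: "2 * (a$j * B$j$k) * (p j * p k) \<le> ?C * ((p j)^2 + (p k)^2)" for j k
  proof -
    have "2 * (p j * p k) \<le> (p j)^2 + (p k)^2"
      using sum_squares_bound[of "p j" "p k"] by (simp add: power2_eq_square)
    then have "(a$j * B$j$k) * (2 * (p j * p k)) \<le> ?C * ((p j)^2 + (p k)^2)"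
      using aB[of j k] aB_nonneg[of j k] by (intro mult_mono) (auto simp: p_def)
    then show ?thesis
      by (simp add: algebra_simps)
  qed
  have "(\<Sum>j\<in>UNIV. 2 * p j * (y$j - f z $ j)) \<le> (\<Sum>j\<in>UNIV. \<Sum>k\<in>UNIV. ?C * ((p j)^2 + (p k)^2))"
    using growth am_gm by (intro sum_mono order_trans[OF growth]) auto
  also have "\<dots> = ?C * ((\<Sum>j\<in>UNIV. \<Sum>k\<in>(UNIV::'n set). (p j)^2) + (\<Sum>j\<in>(UNIV::'n set). \<Sum>k\<in>UNIV. (p k)^2))"
    by (simp add: sum_distrib_left sum.distrib algebra_simps)
  also have "\<dots> = ?C * (real CARD('n) * (\<Sum>j\<in>UNIV. (p j)^2) + real CARD('n) * (\<Sum>j\<in>UNIV. (p j)^2))"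
    by (simp add: sum_distrib_left)
  finally show ?thesis
    by (simp add: algebra_simps)
qed

text \<open>Comparison principle: by quasi-monotonicity of \<open>f\<close> the squared positive part of \<open>x - z\<close>
  grows at most linearly in itself, so Gronwall keeps it at zero.\<close>

lemma subsolution_le_solution:
  assumes x: "is_solution g prob_box x" and g_le: "\<And>u. u \<in> prob_box \<Longrightarrow> g u \<le> f u"
    and z: "is_solution f prob_box z" and "x 0 \<le> z 0" "0 \<le> t"
  shows "x t \<le> z t"
proof -
  define p where "p s j = max 0 (x s $ j - z s $ j)" for s j
  define phi where "phi s = (\<Sum>j\<in>UNIV. (p s j)^2)" for s
  define K where "K = 2 * (\<Sum>j\<in>UNIV. \<Sum>k\<in>UNIV. a$j * B$j$k) * real CARD('n)"
  have "(phi has_real_derivative (\<Sum>j\<in>UNIV. 2 * p s j * (g (x s) $ j - f (z s) $ j)))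
      (at s within {0..})" if "0 \<le> s" for s
    unfolding phi_def p_def using that
    by (intro DERIV_sum has_real_derivative_pos_part_square_comp DERIV_diff
        solution_has_derivative_nth[OF x] solution_has_derivative_nth[OF z])
  moreover have "(\<Sum>j\<in>UNIV. 2 * p s j * (g (x s) $ j - f (z s) $ j)) \<le> K * phi s" if "0 \<le> s" for s
    unfolding p_def phi_def K_def
    using solution_in[OF x that] solution_in[OF z that] g_le[OF solution_in[OF x that]]
    by (rule sum_pos_part_field_diff_le)
  ultimately have "phi t \<le> phi 0 * exp (K * t)"
    using \<open>0 \<le> t\<close> by (rule gronwall_differential)
  moreover have "phi 0 = 0"
    using \<open>x 0 \<le> z 0\<close> by (simp add: phi_def p_def less_eq_vec_def)
  moreover have "(p t i)^2 \<le> phi t" for i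
    unfolding phi_def by (rule member_le_sum) auto
  ultimately have "(p t i)^2 \<le> 0" for i
    by (metis mult_zero_left order_trans)
  then have "max 0 (x t $ i - z t $ i) = 0" for i
    by (simp add: p_def)
  then have "x t $ i - z t $ i \<le> 0" for i
    by (metis max.cobounded2)
  then show ?thesis
    by (simp add: less_eq_vec_def)
qed

lemma solution_le_solution:
  assumes "is_solution f prob_box x" "is_solution f prob_box z" "x 0 \<le> z 0" "0 \<le> t"
  shows "x t \<le> z t"
  using subsolution_le_solution[of f] assms by blast

lemma exists_solution_in_interval:
  assumes "0 \<le> lo" "lo \<le> hi" "hi \<le> 1"
    and at_lo: "\<And>u i. u \<in> {lo..hi} \<Longrightarrow> u$i = lo$i \<Longrightarrow> 0 \<le> f u $ i"
    and at_hi: "\<And>u i. u \<in> {lo..hi} \<Longrightarrow> u$i = hi$i \<Longrightarrow> f u $ i \<le> 0"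
    and "y \<in> {lo..hi}"
  shows "\<exists>x. x 0 = y \<and> is_solution f prob_box x \<and> (\<forall>t\<ge>0. x t \<in> {lo..hi})"
proof -
  let ?c = "clamp lo hi"
  have interval_sub: "{lo..hi} \<subseteq> prob_box"
    using assms(1,3) by (auto simp: prob_box_eq_interval intro: order_trans)
  have c_in: "?c u \<in> {lo..hi}" for u
    using \<open>lo \<le> hi\<close> by (auto simp: clamp_nth_cart less_eq_vec_def)
  obtain x where x0: "x 0 = y"
    and deriv: "\<And>t. 0 \<le> t \<Longrightarrow> (x has_vector_derivative f (?c (x t))) (at t within {0..})"
    using exists_solution_clamped[OF lipschitz_on_subset[OF lipschitz_on_f interval_sub] \<open>lo \<le> hi\<close>]
    by blast
  have deriv_nth: "((\<lambda>t. x t $ i) has_real_derivative f (?c (x t)) $ i) (at t within {0..})"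
    if "0 \<le> t" for t i
    using bounded_linear.has_vector_derivative[OF bounded_linear_vec_nth deriv[OF that]]
    by (simp add: has_real_derivative_iff_has_vector_derivative)
  have "lo$i - x t $ i \<le> 0" if "0 \<le> t" for t i
  proof (rule nonpos_if_deriv_nonpos_where_pos[where g = "\<lambda>t. lo$i - x t $ i"
        and g' = "\<lambda>t. - f (?c (x t)) $ i"])
    show "((\<lambda>t. lo$i - x t $ i) has_real_derivative - f (?c (x t)) $ i) (at t within {0..})"
      if "0 \<le> t" for t
      using deriv_nth[OF that] by (auto intro!: derivative_eq_intros)
    show "- f (?c (x t)) $ i \<le> 0" if "0 < lo$i - x t $ i" for t
      using at_lo[OF c_in[of "x t"], of i] that \<open>lo \<le> hi\<close> by (simp add: clamp_nth_cart)
  qed (use that x0 \<open>y \<in> {lo..hi}\<close> in \<open>auto simp: less_eq_vec_def\<close>)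
  moreover have "x t $ i - hi$i \<le> 0" if "0 \<le> t" for t i
  proof (rule nonpos_if_deriv_nonpos_where_pos[where g = "\<lambda>t. x t $ i - hi$i"
        and g' = "\<lambda>t. f (?c (x t)) $ i"])
    show "((\<lambda>t. x t $ i - hi$i) has_real_derivative f (?c (x t)) $ i) (at t within {0..})"
      if "0 \<le> t" for t
      using deriv_nth[OF that] by (auto intro!: derivative_eq_intros)
    show "f (?c (x t)) $ i \<le> 0" if "0 < x t $ i - hi$i" for t
      using at_hi[OF c_in[of "x t"], of i] that \<open>lo \<le> hi\<close> by (auto simp: clamp_nth_cart less_eq_vec_def)
  qed (use that x0 \<open>y \<in> {lo..hi}\<close> in \<open>auto simp: less_eq_vec_def\<close>)
  ultimately have x_in: "x t \<in> {lo..hi}" if "0 \<le> t" for t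
    using that by (auto simp: less_eq_vec_def)
  then have "is_solution f prob_box x"
    using deriv interval_sub by (auto simp: is_solution_def interval_cbox_cart)
  with x0 x_in show ?thesis by blast
qed

lemma limit_in_prob_box:
  assumes "is_solution f prob_box x" "(x \<longlongrightarrow> e) at_top"
  shows "e \<in> prob_box"
proof (rule Lim_in_closed_set)
  show "closed prob_box"
    by (simp add: prob_box_eq_interval interval_cbox_cart closed_cbox)
  show "\<forall>\<^sub>F t in at_top. x t \<in> prob_box"
    using assms(1) by (auto simp: eventually_at_top_linorder intro!: exI[of _ 0] solution_in)
qed (use assms(2) in auto)

lemma limit_is_equilibrium:
  assumes x: "is_solution f prob_box x" and lim: "(x \<longlongrightarrow> e) at_top"
  shows "f e = 0"
proof -
  have "((\<lambda>t. f (x t)) \<longlongrightarrow> f e) at_top"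
  proof (rule continuous_on_tendsto_compose[OF lipschitz_on_continuous_on[OF lipschitz_on_f] lim])
    show "e \<in> prob_box" by (rule limit_in_prob_box[OF x lim])
    show "\<forall>\<^sub>F t in at_top. x t \<in> prob_box"
      using x by (auto simp: eventually_at_top_linorder intro!: exI[of _ 0] solution_in)
  qed
  then have "f e $ i = 0" for i
    using deriv_limit_zero_if_convergent[OF solution_has_derivative_nth[OF x]
        tendsto_vec_nth[OF lim] tendsto_vec_nth] by blast
  then show ?thesis by (simp add: vec_eq_iff)
qed

lemma exists_solution_from:
  assumes "y \<in> prob_box"
  shows "\<exists>x. x 0 = y \<and> is_solution f prob_box x"
proof -
  have "\<exists>x. x 0 = y \<and> is_solution f prob_box x \<and> (\<forall>t\<ge>0. x t \<in> {0..1})"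
  proof (rule exists_solution_in_interval)
    show "0 \<le> f u $ i" if "u \<in> {0..1}" "u$i = 0$i" for u i
    proof -
      have "0 \<le> (B *v u)$i"
        using that B_nonneg by (intro mult_vec_nth_nonneg) (auto simp: less_eq_vec_def)
      then show ?thesis
        using that a_pos lam_nonneg by (simp add: add_nonneg_nonneg less_imp_le)
    qed
    show "f u $ i \<le> 0" if "u$i = 1$i" for u i
      using that d_pos by (simp add: less_imp_le)
  qed (use assms in \<open>auto simp: prob_box_eq_interval\<close>)
  then show ?thesis by blast
qed

lemma exists_solution_above:
  assumes "w \<in> prob_box" "0 \<le> f w"
  shows "\<exists>x. x 0 = w \<and> is_solution f prob_box x \<and> (\<forall>t\<ge>0. w \<le> x t)"
proof -
  have "\<exists>x. x 0 = w \<and> is_solution f prob_box x \<and> (\<forall>t\<ge>0. x t \<in> {w..1})"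
  proof (rule exists_solution_in_interval)
    show "0 \<le> f u $ i" if "u \<in> {w..1}" "u$i = w$i" for u i
    proof -
      have "f w $ i \<le> f u $ i"
        using that assms(1) a_pos B_nonneg
        by (intro sis_rhs_nth_mono) (auto simp: prob_box_def less_imp_le)
      moreover have "0 \<le> f w $ i"
        using assms(2) by (simp only: less_eq_vec_def zero_index)
      ultimately show ?thesis by linarith
    qed
    show "f u $ i \<le> 0" if "u$i = 1$i" for u i
      using that d_pos by (simp add: less_imp_le)
  qed (use assms in \<open>auto simp: prob_box_eq_interval\<close>)
  then show ?thesis by auto
qed

definition top_trajectory :: "real \<Rightarrow> real^'n" where
  "top_trajectory = (SOME x. x 0 = 1 \<and> is_solution f prob_box x)"

lemma top_trajectory: "top_trajectory 0 = 1" "is_solution f prob_box top_trajectory"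
  using someI_ex[OF exists_solution_from[of 1]] unfolding top_trajectory_def
  by (auto simp: prob_box_def)

lemma solution_le_top_trajectory:
  assumes "is_solution f prob_box x" "0 \<le> t"
  shows "x t \<le> top_trajectory t"
  using solution_in[OF assms(1), of 0]
  by (intro solution_le_solution[OF assms(1) top_trajectory(2) _ assms(2)])
    (auto simp: top_trajectory(1) prob_box_def less_eq_vec_def)

lemma top_trajectory_antimono:
  assumes "0 \<le> s" "s \<le> t"
  shows "top_trajectory t \<le> top_trajectory s"
  using solution_le_top_trajectory[OF solution_shift[OF top_trajectory(2), of "t - s"] assms(1)]
    assms by simp

definition pmax :: "real^'n" where
  "pmax = Lim at_top top_trajectory"

lemma top_trajectory_tendsto: "(top_trajectory \<longlongrightarrow> pmax) at_top"
proof -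
  obtain l where "(top_trajectory \<longlongrightarrow> l) at_top"
    using antimono_bounded_convergent[of top_trajectory 0] top_trajectory_antimono
      solution_in[OF top_trajectory(2)] by (auto simp: prob_box_def less_eq_vec_def)
  then show ?thesis
    unfolding pmax_def by (simp add: tendsto_Lim)
qed

lemma pmax_in_prob_box: "pmax \<in> prob_box"
  by (rule limit_in_prob_box[OF top_trajectory(2) top_trajectory_tendsto])

lemma pmax_equilibrium: "f pmax = 0"
  by (rule limit_is_equilibrium[OF top_trajectory(2) top_trajectory_tendsto])

lemma le_pmax_if_below_solution:
  assumes "is_solution f prob_box x" "\<And>t. 0 \<le> t \<Longrightarrow> w \<le> x t"
  shows "w \<le> pmax"
proof (rule tendsto_vec_le[OF tendsto_const top_trajectory_tendsto])
  show "\<forall>\<^sub>F t in at_top. w \<le> top_trajectory t"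
    using assms solution_le_top_trajectory[OF assms(1)]
    by (auto simp: eventually_at_top_linorder intro!: exI[of _ 0] intro: order_trans)
qed simp

lemma le_pmax_if_subequilibrium:
  assumes "w \<in> prob_box" "0 \<le> f w"
  shows "w \<le> pmax"
  using exists_solution_above[OF assms] le_pmax_if_below_solution by blast

lemma equilibrium_le_pmax:
  assumes "p \<in> prob_box" "f p = 0"
  shows "p \<le> pmax"
  using le_pmax_if_subequilibrium assms by simp

section \<open>Stability of the maximal equilibrium\<close>

lemma sis_rhs_scaleR_equilibrium_nth:
  assumes "0 \<le> p" "f p $ i = 0" "0 < p$i" "0 < v"
  shows "\<exists>K>0. f (v *\<^sub>R p) $ i = (1 - v) * K"
proof -
  have Bp: "0 \<le> (B *v p)$i"
    using assms(1) B_nonneg by (intro mult_vec_nth_nonneg) (auto simp: less_eq_vec_def)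
  have "0 < d$i * p$i"
    using d_pos assms(3) by simp
  then have "0 < (1 - p$i) * a$i * (lam$i + (B *v p)$i)"
    using assms(2) by simp
  then have "lam$i + (B *v p)$i \<noteq> 0"
    by auto
  then have "0 < lam$i + v * p$i * (B *v p)$i"
    using lam_nonneg[rule_format, of i] Bp assms(3,4)
    by (cases "lam$i = 0") (auto intro: add_pos_nonneg)
  moreover have "f (v *\<^sub>R p) $ i = (1 - v) * (a$i * (lam$i + v * p$i * (B *v p)$i))"
    unfolding sis_rhs_scaleR_nth[OF assms(2)] by (simp add: algebra_simps)
  ultimately show ?thesis
    using a_pos by (intro exI[of _ "a$i * (lam$i + v * p$i * (B *v p)$i)"]) simp
qed

lemma scaleR_pmax_in_prob_box: "0 \<le> v \<Longrightarrow> v \<le> 1 \<Longrightarrow> v *\<^sub>R pmax \<in> prob_box"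
  using pmax_in_prob_box by (auto simp: prob_box_def intro: mult_le_one)

lemma subequilibrium_scaleR_pmax:
  assumes "0 \<le> v" "v \<le> 1"
  shows "0 \<le> f (v *\<^sub>R pmax)"
proof -
  have "0 \<le> f (v *\<^sub>R pmax) $ i" for i
  proof -
    have "0 \<le> (B *v pmax)$i"
      using B_nonneg pmax_in_prob_box by (intro mult_vec_nth_nonneg) (auto simp: prob_box_def)
    then have "0 \<le> a$i * (1 - v) * (lam$i + v * pmax$i * (B *v pmax)$i)"
      using assms a_pos lam_nonneg pmax_in_prob_box by (simp add: prob_box_def less_imp_le)
    then show ?thesis
      using sis_rhs_scaleR_nth[of lam a d B pmax i v] pmax_equilibrium by simp
  qed
  then show ?thesis by (simp add: less_eq_vec_def)
qed

text \<open>If \<open>e \<noteq> pmax\<close>, the largest \<open>w < 1\<close> with \<open>w *\<^sub>R pmax \<le> e\<close> touches \<open>e\<close> in some coordinate \<open>i\<close>;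
  there cooperativity gives \<open>f (w *\<^sub>R pmax) $ i \<le> f e $ i = 0\<close>, while scaling gives \<open>> 0\<close>.\<close>

lemma equilibrium_eq_pmax_if_above_scaled:
  assumes e: "e \<in> prob_box" "f e = 0" and "0 < v" "v *\<^sub>R pmax \<le> e"
  shows "e = pmax"
proof (rule ccontr)
  assume "e \<noteq> pmax"
  moreover have "0 \<le> e"
    using e(1) by (simp add: prob_box_eq_interval)
  ultimately obtain w i where w: "v \<le> w" "w < 1" "0 < pmax$i" "w *\<^sub>R pmax \<le> e" "w * pmax$i = e$i"
    using exists_maximal_scaling_below[OF _ equilibrium_le_pmax[OF e]] \<open>v *\<^sub>R pmax \<le> e\<close> by blast
  have "f (w *\<^sub>R pmax) $ i \<le> f e $ i"
    using w e a_pos B_nonneg by (intro sis_rhs_nth_mono) (auto simp: prob_box_def less_imp_le)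
  moreover obtain K where "0 < K" "f (w *\<^sub>R pmax) $ i = (1 - w) * K"
    using sis_rhs_scaleR_equilibrium_nth[of pmax i w] pmax_in_prob_box pmax_equilibrium w \<open>0 < v\<close>
    by (auto simp: prob_box_eq_interval)
  moreover have "0 < (1 - w) * K"
    using \<open>w < 1\<close> \<open>0 < K\<close> by simp
  moreover have "f e $ i = 0"
    using e(2) by (simp del: sis_rhs_nth)
  ultimately show False
    by linarith
qed

lemma scaled_pmax_le_solution:
  assumes "0 \<le> v" "v \<le> 1" "is_solution f prob_box x" "v *\<^sub>R pmax \<le> x 0" "0 \<le> t"
  shows "v *\<^sub>R pmax \<le> x t"
proof -
  obtain s where s: "s 0 = v *\<^sub>R pmax" "is_solution f prob_box s" "\<forall>t\<ge>0. v *\<^sub>R pmax \<le> s t"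
    using exists_solution_above[of "v *\<^sub>R pmax"] scaleR_pmax_in_prob_box subequilibrium_scaleR_pmax
      assms(1,2) by blast
  have "s t \<le> x t"
    using solution_le_solution[OF s(2) assms(3)] s(1) assms(4,5) by simp
  then show ?thesis
    using s(3) assms(5) order_trans by blast
qed

lemma exists_solution_tendsto_pmax:
  assumes "0 < v" "v \<le> 1"
  shows "\<exists>s. s 0 = v *\<^sub>R pmax \<and> is_solution f prob_box s \<and> (s \<longlongrightarrow> pmax) at_top"
proof -
  obtain s where s: "s 0 = v *\<^sub>R pmax" "is_solution f prob_box s" "\<forall>t\<ge>0. v *\<^sub>R pmax \<le> s t"
    using exists_solution_above[of "v *\<^sub>R pmax"] scaleR_pmax_in_prob_box subequilibrium_scaleR_pmax
      assms by auto
  have "s t1 \<le> s t2" if "0 \<le> t1" "t1 \<le> t2" for t1 t2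
    using solution_le_solution[OF s(2) solution_shift[OF s(2), of "t2 - t1"] _ that(1)] s that by simp
  moreover have "s t \<le> 1" if "0 \<le> t" for t
    using solution_in[OF s(2) that] by (simp add: prob_box_eq_interval)
  ultimately obtain e where lim: "(s \<longlongrightarrow> e) at_top"
    using mono_bounded_convergent[of s 1] by blast
  have "e = pmax"
  proof (rule equilibrium_eq_pmax_if_above_scaled)
    show "e \<in> prob_box" "f e = 0"
      using limit_in_prob_box[OF s(2) lim] limit_is_equilibrium[OF s(2) lim] .
    show "v *\<^sub>R pmax \<le> e"
      using s(3) by (intro tendsto_vec_le[OF tendsto_const lim])
        (auto simp: eventually_at_top_linorder intro!: exI[of _ 0])
  qed (use assms in simp)
  with s lim show ?thesis by blast
qed

lemma scaled_pmax_le_near_pmax: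
  assumes "0 < v" "v < 1"
  shows "\<exists>\<delta>>0. \<forall>u\<in>prob_box. dist u pmax < \<delta> \<longrightarrow> v *\<^sub>R pmax \<le> u"
proof -
  define m where "m = Min (insert 1 {pmax$j | j. 0 < pmax$j})"
  have m: "0 < m" "\<And>j. 0 < pmax$j \<Longrightarrow> m \<le> pmax$j"
    unfolding m_def by (auto simp: Min_gr_iff intro: Min_le)
  show ?thesis
  proof (intro exI[of _ "(1 - v) * m"] conjI ballI impI)
    show "0 < (1 - v) * m" using assms m by simp
    fix u assume u: "u \<in> prob_box" "dist u pmax < (1 - v) * m"
    have "v * pmax$i \<le> u$i" for i
    proof (cases "0 < pmax$i")
      case True
      have "pmax$i - u$i < (1 - v) * m"
        using component_le_norm_cart[of "u - pmax" i] u(2) by (simp add: dist_norm)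
      also have "\<dots> \<le> (1 - v) * pmax$i"
        using m(2)[OF True] assms by (intro mult_left_mono) auto
      finally show ?thesis by (simp add: algebra_simps)
    next
      case False
      moreover have "0 \<le> pmax$i" using pmax_in_prob_box by (simp add: prob_box_def)
      ultimately have "pmax$i = 0" by linarith
      then show ?thesis using u(1) by (simp add: prob_box_def)
    qed
    then show "v *\<^sub>R pmax \<le> u" by (simp add: less_eq_vec_def)
  qed
qed

lemma dist_solution_pmax_le:
  assumes x: "is_solution f prob_box x" and "0 \<le> t"
  shows "dist (x t) pmax \<le> dist (x 0) pmax * exp (lip * t)"
proof -
  define psi where "psi s = (\<Sum>j\<in>UNIV. (x s $ j - pmax $ j)^2)" for s
  have psi_eq: "psi s = (dist (x s) pmax)^2" for s
    unfolding psi_def dist_norm power2_norm_eq_inner by (simp add: inner_vec_def power2_eq_square)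
  have "(psi has_real_derivative (\<Sum>j\<in>UNIV. 2 * (x s $ j - pmax $ j) * f (x s) $ j)) (at s within {0..})"
    if "0 \<le> s" for s
    unfolding psi_def
    by (intro DERIV_sum) (auto intro!: derivative_eq_intros solution_has_derivative_nth[OF x that])
  moreover have "(\<Sum>j\<in>UNIV. 2 * (x s $ j - pmax $ j) * f (x s) $ j) \<le> (2 * lip) * psi s"
    if "0 \<le> s" for s
  proof -
    have "(\<Sum>j\<in>UNIV. 2 * (x s $ j - pmax $ j) * f (x s) $ j) = 2 * ((x s - pmax) \<bullet> (f (x s) - f pmax))"
      by (simp add: pmax_equilibrium inner_vec_def sum_distrib_left algebra_simps)
    also have "\<dots> \<le> 2 * (dist (x s) pmax * dist (f (x s)) (f pmax))"
      using norm_cauchy_schwarz by (simp add: dist_norm)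
    also have "\<dots> \<le> 2 * (dist (x s) pmax * (lip * dist (x s) pmax))"
      using lipschitz_onD[OF lipschitz_on_f solution_in[OF x that] pmax_in_prob_box]
      by (intro mult_left_mono) auto
    also have "\<dots> = (2 * lip) * psi s"
      by (simp add: psi_eq power2_eq_square)
    finally show ?thesis .
  qed
  ultimately have "psi t \<le> psi 0 * exp ((2 * lip) * t)"
    using \<open>0 \<le> t\<close> by (rule gronwall_differential)
  also have "\<dots> = (dist (x 0) pmax * exp (lip * t))^2"
    by (simp add: psi_eq power_mult_distrib exp_double[symmetric] algebra_simps)
  finally show ?thesis
    unfolding psi_eq by (rule power2_le_imp_le) simp
qed

lemma dist_pmax_le_if_between:
  assumes "v *\<^sub>R pmax \<le> u" "u \<le> y" "dist y pmax < \<eta>" "1 - v \<le> \<eta>" "v \<le> 1"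
  shows "dist u pmax \<le> real CARD('n) * \<eta>"
proof -
  have "\<bar>(u - pmax) $ i\<bar> \<le> \<eta>" for i
  proof -
    have "v * pmax$i \<le> u$i" "u$i \<le> y$i"
      using assms(1,2) by (simp_all add: less_eq_vec_def)
    moreover have "\<bar>y$i - pmax$i\<bar> < \<eta>"
      using component_le_norm_cart[of "y - pmax" i] assms(3) by (simp add: dist_norm)
    moreover have "(1 - v) * pmax$i \<le> 1 - v"
      using pmax_in_prob_box assms(5) by (simp add: prob_box_def mult_left_le)
    ultimately show ?thesis
      using assms(4) by (auto simp: algebra_simps abs_le_iff)
  qed
  then have "norm (u - pmax) \<le> (\<Sum>i\<in>(UNIV::'n set). \<eta>)"
    by (intro order_trans[OF norm_le_l1_cart] sum_mono)
  then show ?thesis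
    by (simp add: dist_norm)
qed

text \<open>Solutions starting close to \<open>pmax\<close> are squeezed between a scaled copy of \<open>pmax\<close> and the
  top trajectory, which is close to \<open>pmax\<close> after some time \<open>T\<close>; up to time \<open>T\<close> Gronwall suffices.\<close>

lemma pmax_lyapunov_stable:
  assumes "0 < \<epsilon>"
  shows "\<exists>\<delta>>0. \<forall>x. is_solution f prob_box x \<and> dist (x 0) pmax < \<delta> \<longrightarrow> (\<forall>t\<ge>0. dist (x t) pmax < \<epsilon>)"
proof -
  define N where "N = real CARD('n)"
  define \<eta> where "\<eta> = \<epsilon> / (2 * N)"
  have "1 \<le> N" by (simp add: N_def Suc_le_eq)
  then have \<eta>: "0 < \<eta>" "N * \<eta> < \<epsilon>" using assms by (auto simp: \<eta>_def)
  obtain T where "0 \<le> T" and T: "\<And>t. T \<le> t \<Longrightarrow> dist (top_trajectory t) pmax < \<eta>"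
  proof -
    obtain T0 where "\<And>t. T0 \<le> t \<Longrightarrow> dist (top_trajectory t) pmax < \<eta>"
      using top_trajectory_tendsto \<eta>(1) by (auto simp: tendsto_iff eventually_at_top_linorder)
    then show ?thesis using that[of "max 0 T0"] by auto
  qed
  define v where "v = max (1/2) (1 - \<eta> / 2)"
  have v: "0 < v" "v < 1" "1 - v \<le> \<eta>" using \<eta>(1) by (auto simp: v_def)
  obtain \<delta>1 where "0 < \<delta>1" and \<delta>1: "\<And>u. u \<in> prob_box \<Longrightarrow> dist u pmax < \<delta>1 \<Longrightarrow> v *\<^sub>R pmax \<le> u"
    using scaled_pmax_le_near_pmax[OF v(1,2)] by blast
  define \<delta>2 where "\<delta>2 = \<epsilon> * exp (- (lip * T))"
  show ?thesis
  proof (intro exI[of _ "min \<delta>1 \<delta>2"] conjI allI impI)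
    show "0 < min \<delta>1 \<delta>2" using \<open>0 < \<delta>1\<close> assms by (simp add: \<delta>2_def)
    fix x and t :: real
    assume "is_solution f prob_box x \<and> dist (x 0) pmax < min \<delta>1 \<delta>2" and "0 \<le> t"
    then have x: "is_solution f prob_box x" and "dist (x 0) pmax < \<delta>1" "dist (x 0) pmax < \<delta>2"
      by auto
    show "dist (x t) pmax < \<epsilon>"
    proof (cases "T \<le> t")
      case True
      have "v *\<^sub>R pmax \<le> x t"
        using scaled_pmax_le_solution[OF _ _ x \<delta>1 \<open>0 \<le> t\<close>] v solution_in[OF x, of 0]
          \<open>dist (x 0) pmax < \<delta>1\<close> by simp
      then have "dist (x t) pmax \<le> N * \<eta>"
        unfolding N_def using solution_le_top_trajectory[OF x \<open>0 \<le> t\<close>] T[OF True] v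
        by (intro dist_pmax_le_if_between) auto
      then show ?thesis using \<eta>(2) by simp
    next
      case False
      have "dist (x t) pmax \<le> dist (x 0) pmax * exp (lip * t)"
        by (rule dist_solution_pmax_le[OF x \<open>0 \<le> t\<close>])
      also have "\<dots> \<le> dist (x 0) pmax * exp (lip * T)"
        using False lipschitz_on_nonneg[OF lipschitz_on_f] by (intro mult_left_mono) (auto intro: mult_left_mono)
      also have "\<dots> < \<delta>2 * exp (lip * T)"
        using \<open>dist (x 0) pmax < \<delta>2\<close> by simp
      also have "\<dots> = \<epsilon>"
        by (simp add: \<delta>2_def exp_minus field_simps)
      finally show ?thesis .
    qed
  qed
qed

lemma pmax_attractive:
  "\<exists>\<delta>>0. \<forall>x. is_solution f prob_box x \<and> dist (x 0) pmax < \<delta> \<longrightarrow> (x \<longlongrightarrow> pmax) at_top"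
proof -
  obtain \<delta> where "0 < \<delta>" and \<delta>: "\<And>u. u \<in> prob_box \<Longrightarrow> dist u pmax < \<delta> \<Longrightarrow> (1/2) *\<^sub>R pmax \<le> u"
    using scaled_pmax_le_near_pmax[of "1/2"] by auto
  obtain s where s: "s 0 = (1/2) *\<^sub>R pmax" "is_solution f prob_box s" "(s \<longlongrightarrow> pmax) at_top"
    using exists_solution_tendsto_pmax[of "1/2"] by auto
  show ?thesis
  proof (intro exI[of _ \<delta>] conjI allI impI)
    fix x assume "is_solution f prob_box x \<and> dist (x 0) pmax < \<delta>"
    then have x: "is_solution f prob_box x" and "dist (x 0) pmax < \<delta>" by auto
    have "s t \<le> x t" "x t \<le> top_trajectory t" if "0 \<le> t" for t
      using solution_le_solution[OF s(2) x _ that] s(1) \<delta>[OF solution_in[OF x, of 0]]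
        \<open>dist (x 0) pmax < \<delta>\<close> solution_le_top_trajectory[OF x that] by auto
    then have "\<forall>\<^sub>F t in at_top. s t $ i \<le> x t $ i" "\<forall>\<^sub>F t in at_top. x t $ i \<le> top_trajectory t $ i" for i
      by (auto simp: eventually_at_top_linorder less_eq_vec_def intro!: exI[of _ 0])
    then show "(x \<longlongrightarrow> pmax) at_top"
      by (intro vec_tendstoI tendsto_sandwich[OF _ _ tendsto_vec_nth[OF s(3)]
            tendsto_vec_nth[OF top_trajectory_tendsto]])
  qed (fact \<open>0 < \<delta>\<close>)
qed

lemma pmax_stable: "stable_equilibrium f prob_box pmax"
  unfolding stable_equilibrium_def
  using pmax_in_prob_box pmax_equilibrium pmax_lyapunov_stable pmax_attractive by blast

lemma segment_to_pmax_subequilibrium: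
  assumes p: "p \<in> prob_box" "f p = 0" and "0 \<le> \<tau>" "\<tau> \<le> 1"
  defines "y \<equiv> p + \<tau> *\<^sub>R (pmax - p)"
  shows "y \<in> prob_box" "0 \<le> f y"
proof -
  have "p \<le> pmax"
    by (rule equilibrium_le_pmax[OF p])
  then have "p$i \<le> y$i \<and> y$i \<le> pmax$i" for i
    using assms(3,4) mult_left_le_one_le[of "pmax$i - p$i" \<tau>] by (simp add: y_def less_eq_vec_def)
  then have "p \<le> y" "y \<le> pmax"
    by (simp_all add: less_eq_vec_def)
  then show "y \<in> prob_box"
    using p(1) pmax_in_prob_box by (auto simp: prob_box_eq_interval intro: order_trans)
  have "(1 - \<tau>) * f p $ i + \<tau> * f (p + (pmax - p)) $ i \<le> f y $ i" for i
    unfolding y_def using a_pos B_nonneg \<open>p \<le> pmax\<close> assms(3,4)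
    by (intro sis_rhs_nth_concave) (auto simp: less_eq_vec_def less_imp_le)
  then show "0 \<le> f y"
    using p(2) pmax_equilibrium by (simp add: less_eq_vec_def del: sis_rhs_nth)
qed

text \<open>Solutions started on the segment from a smaller equilibrium \<open>p\<close> towards \<open>pmax\<close> stay above
  their starting point, so \<open>p\<close> attracts none of them.\<close>

lemma stable_equilibrium_eq_pmax:
  assumes "stable_equilibrium f prob_box p"
  shows "p = pmax"
proof (rule ccontr)
  assume "p \<noteq> pmax"
  have p: "p \<in> prob_box" "f p = 0"
    using assms by (auto simp: stable_equilibrium_def)
  obtain \<delta> where "0 < \<delta>"
    and \<delta>: "\<And>x. is_solution f prob_box x \<Longrightarrow> dist (x 0) p < \<delta> \<Longrightarrow> (x \<longlongrightarrow> p) at_top"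
    using assms unfolding stable_equilibrium_def by blast
  obtain k where k: "p$k < pmax$k"
    using equilibrium_le_pmax[OF p] \<open>p \<noteq> pmax\<close>
    by (auto simp: vec_eq_iff less_eq_vec_def order.strict_iff_order)
  define \<tau> where "\<tau> = min 1 (\<delta> / (2 * (norm (pmax - p) + 1)))"
  have \<tau>: "0 < \<tau>" "\<tau> \<le> 1" "\<tau> * norm (pmax - p) < \<delta>"
  proof -
    have "\<tau> * norm (pmax - p) \<le> \<delta> / (2 * (norm (pmax - p) + 1)) * (norm (pmax - p) + 1)"
      unfolding \<tau>_def using \<open>0 < \<delta>\<close> by (intro mult_mono) auto
    also have "\<dots> < \<delta>"
      using \<open>0 < \<delta>\<close> by (simp add: field_simps add_pos_nonneg)
    finally show "\<tau> * norm (pmax - p) < \<delta>" .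
    have "0 < 2 * (norm (pmax - p) + 1)"
      by (smt (verit) norm_ge_zero)
    then show "0 < \<tau>"
      using \<open>0 < \<delta>\<close> by (simp add: \<tau>_def)
  qed (simp add: \<tau>_def)
  define y where "y = p + \<tau> *\<^sub>R (pmax - p)"
  obtain x where x: "x 0 = y" "is_solution f prob_box x" "\<forall>t\<ge>0. y \<le> x t"
    using exists_solution_above segment_to_pmax_subequilibrium[OF p, of \<tau>] \<tau>(1,2)
    unfolding y_def by (metis less_imp_le)
  have "dist (x 0) p < \<delta>"
    using \<tau> by (simp add: x(1) y_def dist_norm)
  then have "y \<le> p"
    using x(3) by (intro tendsto_vec_le[OF tendsto_const \<delta>[OF x(2)]])
      (auto simp: eventually_at_top_linorder intro!: exI[of _ 0])
  moreover have "p$k < y$k"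
    using \<tau>(1) k by (simp add: y_def)
  ultimately show False
    by (auto simp: less_eq_vec_def dest: spec[of _ k])
qed

lemma the_stable_equilibrium: "(THE p. stable_equilibrium f prob_box p) = pmax"
  using pmax_stable stable_equilibrium_eq_pmax by blast

section \<open>Positive equilibria and the perturbed problem\<close>

lemma pos_equilibrium_in_prob_box:
  assumes "\<forall>i. 0 < p$i" "f p = 0"
  shows "p \<in> prob_box"
proof -
  have "p$i < 1" for i
  proof -
    have "0 \<le> (B *v p)$i"
      using assms(1) B_nonneg by (intro mult_vec_nth_nonneg) (auto intro: less_imp_le)
    then have nonneg: "0 \<le> a$i * (lam$i + (B *v p)$i)"
      using a_pos lam_nonneg by (intro mult_nonneg_nonneg add_nonneg_nonneg) (auto intro: less_imp_le)
    have "(1 - p$i) * a$i * (lam$i + (B *v p)$i) - d$i * p$i = 0"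
      using assms(2) by (simp add: vec_eq_iff)
    then have "(1 - p$i) * (a$i * (lam$i + (B *v p)$i)) = d$i * p$i"
      by (metis eq_iff_diff_eq_0 mult.assoc)
    moreover have "0 < d$i * p$i"
      using assms(1) d_pos by simp
    ultimately have "0 < (1 - p$i) * (a$i * (lam$i + (B *v p)$i))"
      by linarith
    then show ?thesis
      using nonneg by (auto simp: zero_less_mult_iff)
  qed
  then show ?thesis
    using assms(1) by (auto simp: prob_box_def less_imp_le)
qed

lemma pos_equilibrium_eq_pmax:
  assumes "\<forall>i. 0 < p$i" "f p = 0"
  shows "p = pmax"
proof (rule equilibrium_eq_pmax_if_above_scaled)
  show "p \<in> prob_box"
    using assms by (rule pos_equilibrium_in_prob_box)
  define v where "v = Min (range (\<lambda>i. p$i))"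
  show "0 < v"
    using assms(1) by (simp add: v_def)
  have "v * pmax$i \<le> p$i" for i
  proof -
    have "v * pmax$i \<le> v"
      using \<open>0 < v\<close> pmax_in_prob_box by (simp add: prob_box_def mult_left_le)
    also have "v \<le> p$i"
      by (simp add: v_def)
    finally show ?thesis .
  qed
  then show "v *\<^sub>R pmax \<le> p"
    by (simp add: less_eq_vec_def)
qed (fact assms(2))

lemma pmax_pos:
  assumes "\<forall>i. 0 < lam$i"
  shows "0 < pmax$i"
proof (rule ccontr)
  assume "\<not> 0 < pmax$i"
  moreover have "0 \<le> pmax$i"
    using pmax_in_prob_box by (simp add: prob_box_def)
  ultimately have "pmax$i = 0"
    by linarith
  moreover have "0 \<le> (B *v pmax)$i"
    using B_nonneg pmax_in_prob_box by (intro mult_vec_nth_nonneg) (auto simp: prob_box_def)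
  ultimately have "0 < f pmax $ i"
    using assms a_pos by (simp add: add_pos_nonneg)
  then show False
    using pmax_equilibrium by simp
qed

lemma pmax_mono:
  assumes "lam' \<le> lam" "\<forall>i. 0 \<le> lam'$i"
  shows "sis_system.pmax lam' a d B \<le> pmax"
proof -
  interpret lower: sis_system lam' a d B
    using assms(2) a_pos d_pos B_nonneg by unfold_locales
  have "lower.top_trajectory t \<le> top_trajectory t" if "0 \<le> t" for t
  proof (rule subsolution_le_solution[OF lower.top_trajectory(2) _ top_trajectory(2) _ that])
    show "sis_rhs lam' a d B u \<le> f u" if "u \<in> prob_box" for u
      using assms(1) that a_pos
      by (auto simp: less_eq_vec_def prob_box_def less_imp_le simp del: sis_rhs_nth intro: sis_rhs_nth_mono_lam)
  qed (simp add: lower.top_trajectory(1) top_trajectory(1))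
  then show ?thesis
    by (intro tendsto_vec_le[OF lower.top_trajectory_tendsto top_trajectory_tendsto])
      (auto simp: eventually_at_top_linorder)
qed

end

definition qvec :: "('n \<Rightarrow> real \<Rightarrow> real) \<Rightarrow> real^'n \<Rightarrow> real^'n" where
  "qvec q s = (\<chi> i. q i (s$i))"

lemma sis_field_eq_sis_rhs: "sis_field lam delta B q s = sis_rhs lam (qvec q s) delta B"
  by (rule ext) (simp add: sis_field_def sis_rhs_def qvec_def)

lemma pbar_eq_pmax:
  fixes lam delta :: "real^'n" and B :: "real^'n^'n"
  assumes "\<forall>i. 0 \<le> lam$i" "\<forall>i. 0 < delta$i" "\<forall>i j. 0 \<le> B$i$j" "\<forall>i. 0 < q i (s$i)" "0 \<le> e"
  shows "pbar lam delta B q e s = sis_system.pmax (lam + e *\<^sub>R 1) (qvec q s) delta B"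
proof -
  interpret sis_system "lam + e *\<^sub>R 1" "qvec q s" delta B
    using assms by unfold_locales (auto simp: qvec_def)
  show ?thesis
  proof (cases "e = 0")
    case True
    then show ?thesis
      using the_stable_equilibrium by (simp add: pbar_def sis_field_eq_sis_rhs)
  next
    case False
    have "(1 - p$i) * (lam$i + e + (B *v p)$i) - delta$i * p$i / q i (s$i) = 0 \<longleftrightarrow> f p $ i = 0"
      for p i
    proof -
      have "q i (s$i) \<noteq> 0"
        using assms(4) by (metis less_irrefl)
      then have "f p $ i = q i (s$i) * ((1 - p$i) * (lam$i + e + (B *v p)$i) - delta$i * p$i / q i (s$i))"
        by (simp add: qvec_def field_simps)
      then show ?thesis
        using \<open>q i (s$i) \<noteq> 0\<close> by simp
    qed
    then have "pbar lam delta B q e s = (THE p. (\<forall>i. 0 < p$i) \<and> f p = 0)"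
      using False by (simp add: pbar_def vec_eq_iff)
    also have "\<dots> = pmax"
      using pos_equilibrium_eq_pmax pmax_pos pmax_equilibrium assms(1,5) False
      by (intro the_equality) (auto simp: add_nonneg_pos)
    finally show ?thesis .
  qed
qed

lemma pbar_mono:
  fixes lam delta :: "real^'n" and B :: "real^'n^'n"
  assumes "\<forall>i. 0 \<le> lam$i" "\<forall>i. 0 < delta$i" "\<forall>i j. 0 \<le> B$i$j" "\<forall>i. 0 < q i (s$i)"
    and "0 \<le> e1" "e1 \<le> e2"
  shows "pbar lam delta B q e1 s \<le> pbar lam delta B q e2 s"
proof -
  interpret sis_system "lam + e2 *\<^sub>R 1" "qvec q s" delta B
    using assms by unfold_locales (auto simp: qvec_def)
  have "sis_system.pmax (lam + e1 *\<^sub>R 1) (qvec q s) delta B \<le> pmax"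
    using assms by (intro pmax_mono) (auto simp: less_eq_vec_def)
  then show ?thesis
    using pbar_eq_pmax[where q = q and s = s, OF assms(1-4)] assms(5,6) by simp
qed

lemma objective_mono:
  fixes lam delta c :: "real^'n" and B :: "real^'n^'n"
  assumes "\<forall>i. 0 \<le> lam$i" "\<forall>i. 0 < delta$i" "\<forall>i j. 0 \<le> B$i$j" "\<forall>i. 0 < q i (s$i)"
    and "\<forall>i. 0 \<le> c$i" "0 \<le> e1" "e1 \<le> e2"
  shows "objective lam delta B q w c e1 s \<le> objective lam delta B q w c e2 s"
  using pbar_mono[where q = q and s = s, OF assms(1-4,6,7)] assms(5)
  by (auto simp: objective_def inner_vec_def less_eq_vec_def intro!: sum_mono mult_left_mono)

theorem corollary1:
  fixes lam delta c :: "real^'n"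
    and B :: "real^'n^'n"
    and S :: "(real^'n) set"
    and w :: "real^'n \<Rightarrow> real"
    and q :: "'n \<Rightarrow> real \<Rightarrow> real"
  assumes lam_nonneg: "\<forall>i. lam $ i \<ge> 0"
    and delta_pos: "\<forall>i. delta $ i > 0"
    and B_nonneg: "\<forall>i j. B $ i $ j \<ge> 0"
    and B_diag: "\<forall>i. B $ i $ i = 0"
    and weak: "weakly_connected B"
    and not_strong: "\<not> strongly_connected B"
    and S_sub: "S \<subseteq> {s. \<forall>i. s $ i \<ge> 0}"
    and S_convex: "convex S"
    and w_convex: "convex_on {s. \<forall>i. s $ i \<ge> 0} w"
    and c_nonneg: "\<forall>i. c $ i \<ge> 0"
    and q_range: "\<forall>i x. x \<ge> 0 \<longrightarrow> 0 < q i x \<and> q i x \<le> 1"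
    and q_decr: "\<forall>i x y. 0 \<le> x \<and> x \<le> y \<longrightarrow> q i y \<le> q i x"
    and q_strict_convex: "\<forall>i. strict_convex_on {0..} (q i)"
    and q_C1: "\<forall>i. \<exists>q'. (\<forall>x\<ge>0. (q i has_real_derivative q' x) (at x within {0..}))
                         \<and> continuous_on {0..} q'"
    and min_attained: "\<forall>eps\<ge>0. \<exists>s0\<in>S. \<forall>s\<in>S.
                          objective lam delta B q w c eps s0 \<le> objective lam delta B q w c eps s"
  shows "\<forall>e1 e2. 0 \<le> e1 \<and> e1 \<le> e2 \<longrightarrow>
           Fstar lam delta B q w c S e1 \<le> Fstar lam delta B q w c S e2"
proof (intro allI impI)
  fix e1 e2 :: real assume e: "0 \<le> e1 \<and> e1 \<le> e2"
  obtain s1 where "s1 \<in> S" and s1: "\<forall>s\<in>S. objective lam delta B q w c e1 s1 \<le> objective lam delta B q w c e1 s"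
    using min_attained e by blast
  show "Fstar lam delta B q w c S e1 \<le> Fstar lam delta B q w c S e2"
    unfolding Fstar_def
  proof (rule cINF_mono)
    show "S \<noteq> {}" using \<open>s1 \<in> S\<close> by blast
    show "bdd_below (objective lam delta B q w c e1 ` S)"
      using s1 by (auto intro: bdd_belowI2)
    show "\<exists>s'\<in>S. objective lam delta B q w c e1 s' \<le> objective lam delta B q w c e2 s" if "s \<in> S" for s
    proof -
      have "\<forall>i. 0 < q i (s$i)"
        using that S_sub q_range by auto
      then show ?thesis
        using objective_mono[where q = q and s = s, OF lam_nonneg delta_pos B_nonneg _ c_nonneg] e that
        by blast
    qed
  qed
qed

end
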